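(* Let $\langle E,\rightarrow\rangle$ be a computation and $b$ a regular predicate. Every consistent cut in $\mathcal{C}_b(E)$ can be expressed as the union of some subset of the set $\mathcal{J}_b(E)=\{J_b(e)\mid e\in E\}$.
   Context: A computation is a directed graph $\langle E, \rightarrow\rangle$ whose vertices (events) are partitioned among processes, each process having an initial event and a final event; $\top$ denotes the set of final events. A subset $C\subseteq E$ is a consistent cut if for every edge $(u,v)$, $v\in C$ implies $u\in C$; $\emptyset$ and $E$ are trivial. A predicate is regular if whenever consistent cuts $C_1,C_2$ satisfy it, so do $C_1\cap C_2$ and $C_1\cup C_2$. $\mathcal{C}_b(E)$ denotes the set of non-trivial consistent cuts satisfying $b$ together with $\emptyset$ and $E$ (treated as satisfying $b$). For an event $e$, $J_b(e)$ is the least consistent cut of $\langle E,\rightarrow\rangle$ that satisfies $b$ and contains $e$; if none exists or $e\in\top$, $J_b(e)=E$. The union of the empty subset is $\emptyset$. *)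

theory Defs
  imports Main
begin

text \<open>Events are partitioned among processes by the map proc (the processes are proc ` E);
  each process p has an initial event init p and a final event fin p on that process.
  Following the usual convention of the computation-slicing model, the initial event
  of a process precedes every event of that process and the final event succeeds
  every event of that process, and all initial (resp. final) events occur
  simultaneously, i.e. there are edges between any two of them.\<close>

definition computation ::
  "'a set \<Rightarrow> ('a \<times> 'a) set \<Rightarrow> ('a \<Rightarrow> 'p) \<Rightarrow> ('p \<Rightarrow> 'a) \<Rightarrow> ('p \<Rightarrow> 'a) \<Rightarrow> bool" where
  "computation E edge proc init fin \<longleftrightarrow>
     finite E \<and> edge \<subseteq> E \<times> E \<and>
     (\<forall>p \<in> proc ` E. init p \<in> E \<and> proc (init p) = p \<and> fin p \<in> E \<and> proc (fin p) = p) \<and>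
     (\<forall>e \<in> E. (init (proc e), e) \<in> edge\<^sup>* \<and> (e, fin (proc e)) \<in> edge\<^sup>*) \<and>
     (\<forall>p \<in> proc ` E. \<forall>q \<in> proc ` E. p \<noteq> q \<longrightarrow>
        (init p, init q) \<in> edge \<and> (fin p, fin q) \<in> edge)"

definition final_events :: "'a set \<Rightarrow> ('a \<Rightarrow> 'p) \<Rightarrow> ('p \<Rightarrow> 'a) \<Rightarrow> 'a set" where
  "final_events E proc fin = fin ` (proc ` E)"

definition consistent_cut :: "'a set \<Rightarrow> ('a \<times> 'a) set \<Rightarrow> 'a set \<Rightarrow> bool" where
  "consistent_cut E edge C \<longleftrightarrow> C \<subseteq> E \<and> (\<forall>(u, v) \<in> edge. v \<in> C \<longrightarrow> u \<in> C)"

definition regular_pred :: "'a set \<Rightarrow> ('a \<times> 'a) set \<Rightarrow> ('a set \<Rightarrow> bool) \<Rightarrow> bool" where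
  "regular_pred E edge b \<longleftrightarrow>
     (\<forall>C1 C2. consistent_cut E edge C1 \<longrightarrow> consistent_cut E edge C2 \<longrightarrow> b C1 \<longrightarrow> b C2 \<longrightarrow>
        b (C1 \<inter> C2) \<and> b (C1 \<union> C2))"

definition Cb :: "'a set \<Rightarrow> ('a \<times> 'a) set \<Rightarrow> ('a set \<Rightarrow> bool) \<Rightarrow> 'a set set" where
  "Cb E edge b = {C. consistent_cut E edge C \<and> C \<noteq> {} \<and> C \<noteq> E \<and> b C} \<union> {{}, E}"

definition least_b_cut :: "'a set \<Rightarrow> ('a \<times> 'a) set \<Rightarrow> ('a set \<Rightarrow> bool) \<Rightarrow> 'a \<Rightarrow> 'a set \<Rightarrow> bool" where
  "least_b_cut E edge b e C \<longleftrightarrow>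
     consistent_cut E edge C \<and> b C \<and> e \<in> C \<and>
     (\<forall>C'. consistent_cut E edge C' \<and> b C' \<and> e \<in> C' \<longrightarrow> C \<subseteq> C')"

definition Jb :: "'a set \<Rightarrow> ('a \<times> 'a) set \<Rightarrow> ('a \<Rightarrow> 'p) \<Rightarrow> ('p \<Rightarrow> 'a) \<Rightarrow> ('a set \<Rightarrow> bool) \<Rightarrow> 'a \<Rightarrow> 'a set" where
  "Jb E edge proc fin b e =
     (if e \<in> final_events E proc fin \<or> \<not> (\<exists>C. least_b_cut E edge b e C) then E
      else (THE C. least_b_cut E edge b e C))"

end

theory Submission
  imports Defs
begin

text \<open>Since \<open>E\<close> is finite and \<open>b\<close> is regular, the consistent cuts satisfying \<open>b\<close> and
  containing \<open>e\<close> are closed under intersection, so whenever one of them exists the least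
  one exists and lies inside all of them. A non-trivial cut contains no final event: all final
  events are linked to each other and every event precedes the final event of its process, so
  such a cut would be all of \<open>E\<close>. Hence \<open>e \<in> J\<^sub>b(e) \<subseteq> C\<close> for every non-trivial
  \<open>C \<in> \<C>\<^sub>b(E)\<close> and \<open>e \<in> C\<close>; this also holds for \<open>C = E\<close>, because \<open>J\<^sub>b(e) = E\<close> in the
  degenerate cases of its definition. So \<open>C = \<Union>\<^sub>e\<^sub>\<in>\<^sub>C J\<^sub>b(e)\<close>.\<close>

lemma consistent_cut_rtrancl_closed:
  assumes "consistent_cut E edge C" "(u, v) \<in> edge\<^sup>*" "v \<in> C"
  shows "u \<in> C"
  using assms(2,3)
proof (induction rule: converse_rtrancl_induct)
  case base
  then show ?case .
next
  case (step y z)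
  then show ?case using assms(1) unfolding consistent_cut_def by blast
qed

lemma consistent_cut_Int:
  "consistent_cut E edge C1 \<Longrightarrow> consistent_cut E edge C2 \<Longrightarrow> consistent_cut E edge (C1 \<inter> C2)"
  unfolding consistent_cut_def by blast

lemma regular_pred_Inter:
  assumes "regular_pred E edge b" "finite F" "F \<noteq> {}"
    and "\<forall>X\<in>F. consistent_cut E edge X \<and> b X"
  shows "consistent_cut E edge (\<Inter>F) \<and> b (\<Inter>F)"
  using assms(2-4)
proof (induction F rule: finite_ne_induct)
  case (singleton X)
  then show ?case by simp
next
  case (insert X F)
  then have "consistent_cut E edge X" "b X" "consistent_cut E edge (\<Inter>F)" "b (\<Inter>F)"
    by simp_all
  then show ?case
    using assms(1) consistent_cut_Int unfolding regular_pred_def by simp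
qed

lemma least_b_cut_unique:
  "least_b_cut E edge b e X \<Longrightarrow> least_b_cut E edge b e Y \<Longrightarrow> X = Y"
  unfolding least_b_cut_def by blast

lemma least_b_cut_Inter:
  assumes "finite E" "regular_pred E edge b"
    and "consistent_cut E edge C" "b C" "e \<in> C"
  shows "least_b_cut E edge b e (\<Inter>{X. consistent_cut E edge X \<and> b X \<and> e \<in> X})"
    (is "least_b_cut E edge b e (\<Inter>?F)")
proof -
  have "?F \<subseteq> Pow E"
    unfolding consistent_cut_def by blast
  then have "finite ?F"
    using \<open>finite E\<close> finite_subset by auto
  moreover have "C \<in> ?F"
    using assms(3-5) by blast
  ultimately have "consistent_cut E edge (\<Inter>?F) \<and> b (\<Inter>?F)"
    by (intro regular_pred_Inter[OF assms(2)]) auto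
  then show ?thesis
    unfolding least_b_cut_def by (auto intro: Inter_lower)
qed

lemma Jb_eq_least_b_cut:
  assumes "e \<notin> final_events E proc fin" "least_b_cut E edge b e X"
  shows "Jb E edge proc fin b e = X"
proof -
  have "(THE X. least_b_cut E edge b e X) = X"
    by (rule the_equality[of "least_b_cut E edge b e", OF assms(2)])
      (rule least_b_cut_unique[OF _ assms(2)])
  moreover have "\<not> (e \<in> final_events E proc fin \<or> \<not> (\<exists>X. least_b_cut E edge b e X))"
    using assms by blast
  ultimately show ?thesis
    unfolding Jb_def by argo
qed

lemma Jb_cases:
  "Jb E edge proc fin b e = E \<or> least_b_cut E edge b e (Jb E edge proc fin b e)"
proof (cases "e \<in> final_events E proc fin \<or> \<not> (\<exists>X. least_b_cut E edge b e X)")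
  case True
  then show ?thesis
    unfolding Jb_def by simp
next
  case False
  then obtain X where "e \<notin> final_events E proc fin" "least_b_cut E edge b e X"
    by blast
  then have "Jb E edge proc fin b e = X"
    by (rule Jb_eq_least_b_cut)
  then show ?thesis
    using \<open>least_b_cut E edge b e X\<close> by simp
qed

lemma mem_Jb: "e \<in> E \<Longrightarrow> e \<in> Jb E edge proc fin b e"
  using Jb_cases[of E edge proc fin b e] unfolding least_b_cut_def by auto

lemma Jb_subset: "Jb E edge proc fin b e \<subseteq> E"
  using Jb_cases[of E edge proc fin b e] unfolding least_b_cut_def consistent_cut_def by auto

lemma final_event_in_cut_imp_eq:
  assumes comp: "computation E edge proc init fin" and C: "consistent_cut E edge C"
    and "e \<in> final_events E proc fin" "e \<in> C"
  shows "C = E"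
proof -
  have fin_edge: "(fin q, fin p) \<in> edge" if "p \<in> proc ` E" "q \<in> proc ` E" "q \<noteq> p" for p q
    using comp that unfolding computation_def by blast
  have to_fin: "(x, fin (proc x)) \<in> edge\<^sup>*" if "x \<in> E" for x
    using comp that unfolding computation_def by blast
  obtain p where p: "p \<in> proc ` E" "e = fin p"
    using assms(3) unfolding final_events_def by blast
  have fin_in_C: "fin q \<in> C" if "q \<in> proc ` E" for q
  proof (cases "q = p")
    case True
    then show ?thesis using p \<open>e \<in> C\<close> by simp
  next
    case False
    then have "(fin q, fin p) \<in> edge"
      using fin_edge p that by blast
    then show ?thesis
      using C p \<open>e \<in> C\<close> unfolding consistent_cut_def by blast
  qed
  have "x \<in> C" if "x \<in> E" for x
    using consistent_cut_rtrancl_closed[OF C to_fin[OF that]] fin_in_C that by blast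
  then show ?thesis
    using C unfolding consistent_cut_def by blast
qed

lemma Jb_subset_cut:
  assumes comp: "computation E edge proc init fin" and "regular_pred E edge b"
    and C: "consistent_cut E edge C" "b C" "C \<noteq> E" and "e \<in> C"
  shows "Jb E edge proc fin b e \<subseteq> C"
proof -
  let ?J = "\<Inter>{X. consistent_cut E edge X \<and> b X \<and> e \<in> X}"
  have "finite E"
    using comp unfolding computation_def by (rule conjunct1)
  then have "least_b_cut E edge b e ?J"
    using assms(2) C(1,2) \<open>e \<in> C\<close> by (rule least_b_cut_Inter)
  moreover have "e \<notin> final_events E proc fin"
    using final_event_in_cut_imp_eq[OF comp C(1) _ \<open>e \<in> C\<close>] C(3) by blast
  ultimately have "Jb E edge proc fin b e = ?J"
    by (rule Jb_eq_least_b_cut[rotated])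
  then show ?thesis
    using C \<open>e \<in> C\<close> by blast
qed

theorem lemma5:
  fixes E :: "'a set" and edge :: "('a \<times> 'a) set" and proc :: "'a \<Rightarrow> 'p"
    and init fin :: "'p \<Rightarrow> 'a" and b :: "'a set \<Rightarrow> bool" and C :: "'a set"
  assumes "computation E edge proc init fin"
    and "regular_pred E edge b"
    and "C \<in> Cb E edge b"
  shows "\<exists>S \<subseteq> Jb E edge proc fin b ` E. C = \<Union> S"
proof -
  let ?J = "Jb E edge proc fin b"
  have C_cases: "C = E \<or> consistent_cut E edge C \<and> b C \<and> C \<noteq> E \<or> C = {}"
    using assms(3) unfolding Cb_def by blast
  then have "C \<subseteq> E"
    unfolding consistent_cut_def by blast
  have "?J e \<subseteq> C" if "e \<in> C" for e
    using C_cases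
  proof (elim disjE conjE)
    assume "C = E"
    then show ?thesis
      using Jb_subset by simp
  next
    assume "consistent_cut E edge C" "b C" "C \<noteq> E"
    then show ?thesis
      by (rule Jb_subset_cut[OF assms(1,2) _ _ _ that])
  qed (use that in simp)
  moreover have "e \<in> ?J e" if "e \<in> C" for e
    using \<open>C \<subseteq> E\<close> that by (intro mem_Jb) blast
  ultimately have "C = \<Union> (?J ` C)"
    by blast
  moreover have "?J ` C \<subseteq> ?J ` E"
    using \<open>C \<subseteq> E\<close> by (rule image_mono)
  ultimately show ?thesis
    by (intro exI[of _ "?J ` C"]) simp
qed

end
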